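(* Let $\Theta$ be a hypergraph with at least $d+2$ vertices. If a generic framework $(p,\Theta)$ with $p:V(\Theta)\to\mathbb{R}^d$ is affinely rigid in $\mathbb{R}^d$, then $(p,\Theta)$ is universally Euclidean rigid.
   Context: A hypergraph $\Theta$ has a finite vertex set $V$ and hyperedges that are subsets of $V$; a framework $(p,\Theta)$ pairs it with a configuration $p:V\to\mathbb{R}^d$. A configuration is generic if its coordinates satisfy no nonzero polynomial equation with rational coefficients. For a group $G$ acting on $\mathbb{R}^k$, frameworks $(p,\Theta),(q,\Theta)$ in $\mathbb{R}^k$ are $G$-equivalent if for each hyperedge $h$ there is $g_h\in G$ with $g_h(p(u))=q(u)$ for all $u\in h$, and $G$-congruent if one $g\in G$ satisfies $g(p(u))=q(u)$ for all $u\in V$. $(p,\Theta)$ is affinely rigid in $\mathbb{R}^d$ if every framework in $\mathbb{R}^d$ equivalent to it under the group of invertible affine maps of $\mathbb{R}^d$ is congruent to it under that group. Viewing $\mathbb{R}^d\subset\mathbb{R}^{d'}$ ($d'\ge d$) as the first $d$ coordinates, $(p,\Theta)$ is universally Euclidean rigid if for every $d'\ge d$, every framework $(q,\Theta)$ in $\mathbb{R}^{d'}$ equivalent to it under the Euclidean isometry group of $\mathbb{R}^{d'}$ is congruent to it under that group. *)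

theory Defs
  imports Complex_Main
begin

text \<open>Points of R^k are represented as functions nat => real vanishing at all
  indices >= k; thus R^d is the subset of R^d' given by the first d coordinates.\<close>

definition Rk :: "nat \<Rightarrow> (nat \<Rightarrow> real) set" where
  "Rk k = {x. \<forall>i\<ge>k. x i = 0}"

definition affine_group :: "nat \<Rightarrow> ((nat \<Rightarrow> real) \<Rightarrow> (nat \<Rightarrow> real)) set" where
  "affine_group k = {g. bij_betw g (Rk k) (Rk k) \<and>
     (\<exists>(A :: nat \<Rightarrow> nat \<Rightarrow> real) (b :: nat \<Rightarrow> real). \<forall>x \<in> Rk k. \<forall>i < k.
        g x i = (\<Sum>j<k. A i j * x j) + b i)}"

definition eucl_group :: "nat \<Rightarrow> ((nat \<Rightarrow> real) \<Rightarrow> (nat \<Rightarrow> real)) set" where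
  "eucl_group k = {g. bij_betw g (Rk k) (Rk k) \<and>
     (\<forall>x \<in> Rk k. \<forall>y \<in> Rk k.
        (\<Sum>i<k. (g x i - g y i)^2) = (\<Sum>i<k. (x i - y i)^2))}"

definition hypergraph :: "'v set \<Rightarrow> 'v set set \<Rightarrow> bool" where
  "hypergraph V H \<longleftrightarrow> finite V \<and> (\<forall>h\<in>H. h \<subseteq> V)"

definition config :: "'v set \<Rightarrow> nat \<Rightarrow> ('v \<Rightarrow> nat \<Rightarrow> real) \<Rightarrow> bool" where
  "config V k p \<longleftrightarrow> (\<forall>u\<in>V. p u \<in> Rk k)"

definition G_equivalent ::
  "((nat \<Rightarrow> real) \<Rightarrow> (nat \<Rightarrow> real)) set \<Rightarrow> 'v set set \<Rightarrow>
   ('v \<Rightarrow> nat \<Rightarrow> real) \<Rightarrow> ('v \<Rightarrow> nat \<Rightarrow> real) \<Rightarrow> bool" where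
  "G_equivalent G H p q \<longleftrightarrow> (\<forall>h\<in>H. \<exists>g\<in>G. \<forall>u\<in>h. g (p u) = q u)"

definition G_congruent ::
  "((nat \<Rightarrow> real) \<Rightarrow> (nat \<Rightarrow> real)) set \<Rightarrow> 'v set \<Rightarrow>
   ('v \<Rightarrow> nat \<Rightarrow> real) \<Rightarrow> ('v \<Rightarrow> nat \<Rightarrow> real) \<Rightarrow> bool" where
  "G_congruent G V p q \<longleftrightarrow> (\<exists>g\<in>G. \<forall>u\<in>V. g (p u) = q u)"

text \<open>A polynomial is a finitely supported
  coefficient function on monomials (exponent vectors over the variables V x {..<d}).\<close>
definition generic_config :: "'v set \<Rightarrow> nat \<Rightarrow> ('v \<Rightarrow> nat \<Rightarrow> real) \<Rightarrow> bool" where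
  "generic_config V d p \<longleftrightarrow>
    (\<forall>c :: ('v \<times> nat \<Rightarrow> nat) \<Rightarrow> rat.
       finite {m. c m \<noteq> 0} \<and>
       (\<forall>m. c m \<noteq> 0 \<longrightarrow> (\<forall>w. m w \<noteq> 0 \<longrightarrow> w \<in> V \<times> {..<d})) \<and>
       (\<Sum>m\<in>{m. c m \<noteq> 0}. of_rat (c m) *
           (\<Prod>w\<in>V \<times> {..<d}. p (fst w) (snd w) ^ m w)) = 0
       \<longrightarrow> (\<forall>m. c m = 0))"

definition affinely_rigid :: "'v set \<Rightarrow> 'v set set \<Rightarrow> nat \<Rightarrow> ('v \<Rightarrow> nat \<Rightarrow> real) \<Rightarrow> bool" where
  "affinely_rigid V H d p \<longleftrightarrow>
    (\<forall>q. config V d q \<longrightarrow> G_equivalent (affine_group d) H p q \<longrightarrow>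
         G_congruent (affine_group d) V p q)"

definition universally_eucl_rigid :: "'v set \<Rightarrow> 'v set set \<Rightarrow> nat \<Rightarrow> ('v \<Rightarrow> nat \<Rightarrow> real) \<Rightarrow> bool" where
  "universally_eucl_rigid V H d p \<longleftrightarrow>
    (\<forall>d'\<ge>d. \<forall>q. config V d' q \<longrightarrow> G_equivalent (eucl_group d') H p q \<longrightarrow>
         G_congruent (eucl_group d') V p q)"

end

theory Submission
  imports Defs "Jordan_Normal_Form.Determinant"
begin

text \<open>Genericity makes any d+1 points of the configuration affinely independent, so a function
  that is affine in p is determined by its values on d+1 vertices, and arbitrary values on d+1
  vertices are attained by such a function. Affine rigidity implies that a function which is affine
  in p on each hyperedge is affine in p on all of V: adding a small multiple of it to the first
  coordinate is realised on every hyperedge by a shear. Applied to the indicator function of a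
  vertex, this shows that some hyperedge has at least d+1 vertices. Now let q be a framework in
  R^d' that is Euclidean-equivalent to p. Isometries are affine, so each coordinate of q is affine
  in p on every hyperedge and hence on V; the isometry attached to the large hyperedge agrees with q
  on d+1 generic vertices, and therefore on all of them.\<close>

section \<open>Functions affine in a configuration\<close>

definition affine_of_config :: "nat \<Rightarrow> ('v \<Rightarrow> nat \<Rightarrow> real) \<Rightarrow> 'v set \<Rightarrow> ('v \<Rightarrow> real) \<Rightarrow> bool" where
  "affine_of_config d p S t \<longleftrightarrow> (\<exists>c c0. \<forall>u\<in>S. t u = (\<Sum>l<d. c l * p u l) + c0)"

lemma affine_of_config_subset:
  "affine_of_config d p T t \<Longrightarrow> S \<subseteq> T \<Longrightarrow> affine_of_config d p S t"
  unfolding affine_of_config_def by blast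

lemma affine_of_config_cong:
  "affine_of_config d p S t \<Longrightarrow> (\<And>u. u \<in> S \<Longrightarrow> t u = t' u) \<Longrightarrow> affine_of_config d p S t'"
  unfolding affine_of_config_def by metis

lemma affine_of_config_const: "affine_of_config d p S (\<lambda>_. a)"
  unfolding affine_of_config_def by (intro exI[where x="\<lambda>_. 0"] exI[where x=a]) simp

lemma affine_of_config_coordinate:
  assumes "i < d"
  shows "affine_of_config d p S (\<lambda>u. p u i)"
proof -
  define c :: "nat \<Rightarrow> real" where "c l = (if l = i then 1 else 0)" for l
  have "(\<Sum>l<d. c l * p u l) = (\<Sum>l<d. if l = i then p u l else 0)" for u
    by (rule sum.cong) (simp_all add: c_def)
  then have "\<forall>u\<in>S. p u i = (\<Sum>l<d. c l * p u l) + 0" using assms by simp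
  then show ?thesis unfolding affine_of_config_def by blast
qed

lemma affine_of_config_lincomb:
  assumes "affine_of_config d p S s" and "affine_of_config d p S t"
  shows "affine_of_config d p S (\<lambda>u. \<alpha> * s u + \<beta> * t u)"
proof -
  obtain a a0 b b0 where
    s: "\<forall>u\<in>S. s u = (\<Sum>l<d. a l * p u l) + a0" and t: "\<forall>u\<in>S. t u = (\<Sum>l<d. b l * p u l) + b0"
    using assms unfolding affine_of_config_def by blast
  define c where "c l = \<alpha> * a l + \<beta> * b l" for l
  have "\<forall>u\<in>S. \<alpha> * s u + \<beta> * t u = (\<Sum>l<d. c l * p u l) + (\<alpha> * a0 + \<beta> * b0)"
    using s t by (simp add: c_def algebra_simps sum.distrib sum_distrib_left)
  then show ?thesis unfolding affine_of_config_def by blast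
qed

section \<open>Generic configurations\<close>

definition augmented_mat :: "('v \<Rightarrow> nat \<Rightarrow> real) \<Rightarrow> (nat \<Rightarrow> 'v) \<Rightarrow> nat \<Rightarrow> real mat" where
  "augmented_mat p v d = mat (Suc d) (Suc d) (\<lambda>(k, j). if j < d then p (v k) j else 1)"

text \<open>The exponent vector of the monomial that the permutation \<sigma> contributes to the
  determinant of \<^term>\<open>augmented_mat p v d\<close>.\<close>

definition perm_monomial :: "(nat \<Rightarrow> 'v) \<Rightarrow> nat \<Rightarrow> (nat \<Rightarrow> nat) \<Rightarrow> 'v \<times> nat \<Rightarrow> nat" where
  "perm_monomial v d \<sigma> = (\<lambda>(u, j). if j < d \<and> (\<exists>k<Suc d. v k = u \<and> \<sigma> k = j) then 1 else 0)"

lemma perm_monomial_apply: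
  assumes "inj_on v {0..<Suc d}" and "k < Suc d"
  shows "perm_monomial v d \<sigma> (v k, j) = (if j < d \<and> \<sigma> k = j then 1 else 0)"
  using assms by (auto simp: perm_monomial_def dest: inj_onD)

lemma inj_on_perm_monomial:
  assumes inj: "inj_on v {0..<Suc d}"
  shows "inj_on (perm_monomial v d) {\<sigma>. \<sigma> permutes {0..<Suc d}}"
proof (rule inj_onI, rule ext)
  fix \<sigma> \<tau> k
  assume \<sigma>: "\<sigma> \<in> {\<sigma>. \<sigma> permutes {0..<Suc d}}" and \<tau>: "\<tau> \<in> {\<sigma>. \<sigma> permutes {0..<Suc d}}"
    and eq: "perm_monomial v d \<sigma> = perm_monomial v d \<tau>"
  show "\<sigma> k = \<tau> k"
  proof (cases "k < Suc d")
    case False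
    then show ?thesis using \<sigma> \<tau> by (simp add: permutes_def)
  next
    case k: True
    have agree: "\<rho> k = \<pi> k"
      if "perm_monomial v d \<pi> = perm_monomial v d \<rho>" and "\<pi> k < d" for \<pi> \<rho>
      using fun_cong[OF that(1), of "(v k, \<pi> k)"] that(2)
      by (simp add: perm_monomial_apply[OF inj k] split: if_splits)
    have "\<sigma> k < Suc d" "\<tau> k < Suc d" using \<sigma> \<tau> k by (auto simp: permutes_in_image)
    then show ?thesis using agree[OF eq] agree[OF eq[symmetric]] by fastforce
  qed
qed

lemma prod_perm_monomial:
  assumes inj: "inj_on v {0..<Suc d}" and sub: "v ` {0..<Suc d} \<subseteq> V" and "finite V"
  shows "(\<Prod>w\<in>V \<times> {..<d}. p (fst w) (snd w) ^ perm_monomial v d \<sigma> w)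
        = (\<Prod>k = 0..<Suc d. if \<sigma> k < d then p (v k) (\<sigma> k) else 1)"
proof -
  let ?K = "{k\<in>{0..<Suc d}. \<sigma> k < d}"
  let ?T = "(\<lambda>k. (v k, \<sigma> k)) ` ?K"
  have inj_K: "inj_on (\<lambda>k. (v k, \<sigma> k)) ?K" using inj by (auto simp: inj_on_def)
  have "?T \<subseteq> V \<times> {..<d}" using sub by auto
  have "(\<Prod>w\<in>V \<times> {..<d}. p (fst w) (snd w) ^ perm_monomial v d \<sigma> w)
      = (\<Prod>w\<in>V \<times> {..<d}. if w \<in> ?T then p (fst w) (snd w) else 1)"
    by (rule prod.cong) (auto simp: perm_monomial_def)
  also have "\<dots> = (\<Prod>w\<in>?T. p (fst w) (snd w))"
    using \<open>?T \<subseteq> V \<times> {..<d}\<close> \<open>finite V\<close> by (simp add: prod.If_cases Int_absorb1)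
  also have "\<dots> = (\<Prod>k\<in>?K. p (v k) (\<sigma> k))"
    by (subst prod.reindex[OF inj_K]) simp
  also have "\<dots> = (\<Prod>k = 0..<Suc d. if \<sigma> k < d then p (v k) (\<sigma> k) else 1)"
    by (rule prod.inter_filter) simp
  finally show ?thesis .
qed

lemma det_augmented_mat:
  "det (augmented_mat p v d) =
     (\<Sum>\<sigma> | \<sigma> permutes {0..<Suc d}. of_int (sign \<sigma>) *
        (\<Prod>k = 0..<Suc d. if \<sigma> k < d then p (v k) (\<sigma> k) else 1))"
proof -
  have entry: "augmented_mat p v d $$ (k, \<sigma> k) = (if \<sigma> k < d then p (v k) (\<sigma> k) else 1)"
    if "\<sigma> permutes {0..<Suc d}" "k \<in> {0..<Suc d}" for \<sigma> k
    using that by (simp add: augmented_mat_def permutes_in_image)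
  have "det (augmented_mat p v d) = (\<Sum>\<sigma> | \<sigma> permutes {0..<Suc d}. of_int (sign \<sigma>) *
        (\<Prod>k = 0..<Suc d. augmented_mat p v d $$ (k, \<sigma> k)))"
    unfolding det_def by (simp add: augmented_mat_def)
  also have "\<dots> = (\<Sum>\<sigma> | \<sigma> permutes {0..<Suc d}. of_int (sign \<sigma>) *
        (\<Prod>k = 0..<Suc d. if \<sigma> k < d then p (v k) (\<sigma> k) else 1))"
    using entry by (intro sum.cong refl arg_cong[where f="\<lambda>x. _ * x"] prod.cong) auto
  finally show ?thesis .
qed

text \<open>The determinant of the augmented matrix is a polynomial in the coordinates whose
  monomials are indexed injectively by permutations; genericity forbids it to vanish,
  since the identity permutation contributes the coefficient 1.\<close>

lemma generic_det_augmented_mat_nonzero: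
  assumes gen: "generic_config V d p" and "finite V"
    and inj: "inj_on v {0..<Suc d}" and sub: "v ` {0..<Suc d} \<subseteq> V"
  shows "det (augmented_mat p v d) \<noteq> 0"
proof
  assume det0: "det (augmented_mat p v d) = 0"
  let ?P = "{\<sigma>. \<sigma> permutes {0..<Suc d}}"
  define c where "c m = (\<Sum>\<sigma> | \<sigma> \<in> ?P \<and> perm_monomial v d \<sigma> = m. (of_int (sign \<sigma>) :: rat))" for m
  have inj_m: "inj_on (perm_monomial v d) ?P" using inj_on_perm_monomial[OF inj] .
  have c_monomial: "c (perm_monomial v d \<sigma>) = of_int (sign \<sigma>)" if "\<sigma> \<in> ?P" for \<sigma>
  proof -
    have "{\<tau>. \<tau> \<in> ?P \<and> perm_monomial v d \<tau> = perm_monomial v d \<sigma>} = {\<sigma>}"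
      using that inj_m by (auto dest: inj_onD)
    then show ?thesis unfolding c_def by simp
  qed
  have supp: "{m. c m \<noteq> 0} = perm_monomial v d ` ?P"
  proof
    show "{m. c m \<noteq> 0} \<subseteq> perm_monomial v d ` ?P"
    proof (rule subsetI, rule ccontr)
      fix m assume "m \<in> {m. c m \<noteq> 0}" and "m \<notin> perm_monomial v d ` ?P"
      then have "{\<sigma>. \<sigma> \<in> ?P \<and> perm_monomial v d \<sigma> = m} = {}" by blast
      then have "c m = 0" unfolding c_def by (simp only: sum.empty)
      with \<open>m \<in> {m. c m \<noteq> 0}\<close> show False by simp
    qed
    show "perm_monomial v d ` ?P \<subseteq> {m. c m \<noteq> 0}"
      using c_monomial by auto
  qed
  have support: "\<forall>m. c m \<noteq> 0 \<longrightarrow> (\<forall>w. m w \<noteq> 0 \<longrightarrow> w \<in> V \<times> {..<d})"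
  proof (intro allI impI)
    fix m w assume "c m \<noteq> 0" and "m w \<noteq> 0"
    then obtain \<sigma> where "m = perm_monomial v d \<sigma>" using supp by blast
    then show "w \<in> V \<times> {..<d}"
      using \<open>m w \<noteq> 0\<close> sub unfolding perm_monomial_def by (auto split: prod.splits if_splits)
  qed
  have "(\<Sum>m\<in>{m. c m \<noteq> 0}. of_rat (c m) * (\<Prod>w\<in>V \<times> {..<d}. p (fst w) (snd w) ^ m w))
      = (\<Sum>\<sigma>\<in>?P. of_rat (c (perm_monomial v d \<sigma>)) *
           (\<Prod>w\<in>V \<times> {..<d}. p (fst w) (snd w) ^ perm_monomial v d \<sigma> w))"
    unfolding supp by (rule sum.reindex[OF inj_m, unfolded comp_def])
  also have "\<dots> = det (augmented_mat p v d)"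
    unfolding det_augmented_mat
    by (rule sum.cong) (auto simp: c_monomial prod_perm_monomial[OF inj sub \<open>finite V\<close>])
  finally have "(\<Sum>m\<in>{m. c m \<noteq> 0}. of_rat (c m) * (\<Prod>w\<in>V \<times> {..<d}. p (fst w) (snd w) ^ m w)) = 0"
    using det0 by simp
  moreover have "finite {m. c m \<noteq> 0}" unfolding supp by (simp add: finite_permutations)
  ultimately have "\<forall>m. c m = 0"
    using gen[unfolded generic_config_def, THEN spec, of c] support by blast
  moreover have "c (perm_monomial v d id) = 1"
    using c_monomial[of id] by (simp add: permutes_id)
  ultimately show False by simp
qed

lemma obtain_enumeration_det_nonzero:
  assumes "generic_config V d p" and "finite V" and "S \<subseteq> V" and "card S = Suc d"
  obtains v where "bij_betw v {0..<Suc d} S" and "det (augmented_mat p v d) \<noteq> 0"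
proof -
  have "finite S" using assms finite_subset by blast
  then obtain v where v: "bij_betw v {0..<Suc d} S"
    using ex_bij_betw_nat_finite \<open>card S = Suc d\<close> by fastforce
  then have "inj_on v {0..<Suc d}" "v ` {0..<Suc d} \<subseteq> V"
    using \<open>S \<subseteq> V\<close> by (auto simp: bij_betw_def)
  with v assms show ?thesis using generic_det_augmented_mat_nonzero that by blast
qed

lemma augmented_mat_mult_vec:
  assumes "k < Suc d" and "x \<in> carrier_vec (Suc d)"
  shows "(augmented_mat p v d *\<^sub>v x) $ k = (\<Sum>l<d. x $ l * p (v k) l) + x $ d"
proof -
  have "(augmented_mat p v d *\<^sub>v x) $ k = (\<Sum>j<Suc d. (if j < d then p (v k) j else 1) * x $ j)"
    using assms by (auto simp: augmented_mat_def scalar_prod_def atLeast0LessThan intro: sum.cong)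
  then show ?thesis by (simp add: lessThan_Suc mult.commute)
qed

lemma augmented_mat_carrier: "augmented_mat p v d \<in> carrier_mat (Suc d) (Suc d)"
  by (simp add: augmented_mat_def)

lemma generic_affine_interpolation:
  assumes "generic_config V d p" and "finite V" and "S \<subseteq> V" and "card S = Suc d"
  shows "affine_of_config d p S t"
proof -
  obtain v where v: "bij_betw v {0..<Suc d} S" and det: "det (augmented_mat p v d) \<noteq> 0"
    using obtain_enumeration_det_nonzero assms .
  obtain B where B: "B \<in> carrier_mat (Suc d) (Suc d)" "augmented_mat p v d * B = 1\<^sub>m (Suc d)"
    using det_non_zero_imp_unit[OF augmented_mat_carrier det, of undefined]
    unfolding Units_def ring_mat_def by auto
  define tv where "tv = vec (Suc d) (\<lambda>k. t (v k))"
  define x where "x = B *\<^sub>v tv"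
  have tv: "tv \<in> carrier_vec (Suc d)" by (simp add: tv_def)
  have x: "x \<in> carrier_vec (Suc d)" using B by (simp add: x_def tv_def)
  have "augmented_mat p v d *\<^sub>v x = (augmented_mat p v d * B) *\<^sub>v tv"
    unfolding x_def by (rule assoc_mult_mat_vec[symmetric, OF augmented_mat_carrier B(1) tv])
  then have solution: "augmented_mat p v d *\<^sub>v x = tv" using B(2) tv by simp
  have "t u = (\<Sum>l<d. x $ l * p u l) + x $ d" if "u \<in> S" for u
  proof -
    obtain k where k: "k < Suc d" "u = v k" using v \<open>u \<in> S\<close> by (auto simp: bij_betw_def)
    show ?thesis
      using augmented_mat_mult_vec[OF k(1) x, of p v] solution k by (simp add: tv_def)
  qed
  then show ?thesis unfolding affine_of_config_def by blast
qed

lemma generic_affine_vanishing_imp_zero: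
  assumes "generic_config V d p" and "finite V" and "S \<subseteq> V" and "card S = Suc d"
    and vanish: "\<forall>u\<in>S. (\<Sum>l<d. c l * p u l) + c0 = 0"
  shows "(\<forall>l<d. c l = 0) \<and> c0 = 0"
proof -
  obtain v where v: "bij_betw v {0..<Suc d} S" and det: "det (augmented_mat p v d) \<noteq> 0"
    using obtain_enumeration_det_nonzero assms(1-4) .
  define x where "x = vec (Suc d) (\<lambda>j. if j < d then c j else c0)"
  have x: "x \<in> carrier_vec (Suc d)" by (simp add: x_def)
  have "augmented_mat p v d *\<^sub>v x = 0\<^sub>v (Suc d)"
  proof (rule eq_vecI)
    fix k assume "k < dim_vec (0\<^sub>v (Suc d))"
    then have k: "k < Suc d" by simp
    then have "v k \<in> S" using v by (auto simp: bij_betw_def)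
    then show "(augmented_mat p v d *\<^sub>v x) $ k = 0\<^sub>v (Suc d) $ k"
      using augmented_mat_mult_vec[OF k x, of p v] vanish k by (simp add: x_def)
  qed (simp add: augmented_mat_def)
  then have "x = 0\<^sub>v (Suc d)"
    using det det_0_iff_vec_prod_zero[OF augmented_mat_carrier] x by blast
  then have coeff: "(if j < d then c j else c0) = 0" if "j < Suc d" for j
  proof -
    have "x $ j = 0" using \<open>x = 0\<^sub>v (Suc d)\<close> that by simp
    then show ?thesis using that by (simp add: x_def)
  qed
  show ?thesis
  proof (intro conjI allI impI)
    show "c l = 0" if "l < d" for l using coeff[of l] that by simp
    show "c0 = 0" using coeff[of d] by simp
  qed
qed

lemma generic_affine_agree:
  assumes "generic_config V d p" and "finite V" and "S \<subseteq> V" and "card S = Suc d"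
    and "affine_of_config d p V t" and "affine_of_config d p V t'"
    and agree: "\<forall>u\<in>S. t u = t' u"
  shows "\<forall>u\<in>V. t u = t' u"
proof -
  obtain c c0 c' c0' where
    t: "\<forall>u\<in>V. t u = (\<Sum>l<d. c l * p u l) + c0" and
    t': "\<forall>u\<in>V. t' u = (\<Sum>l<d. c' l * p u l) + c0'"
    using assms(5,6) unfolding affine_of_config_def by blast
  have diff_vanishes: "(\<Sum>l<d. (c l - c' l) * p u l) + (c0 - c0') = 0" if "u \<in> S" for u
  proof -
    have "u \<in> V" using that \<open>S \<subseteq> V\<close> by blast
    then have "(\<Sum>l<d. c l * p u l) + c0 = (\<Sum>l<d. c' l * p u l) + c0'"
      using t t' agree that by metis
    then show ?thesis by (simp add: left_diff_distrib sum_subtractf)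
  qed
  have "(\<forall>l<d. c l - c' l = 0) \<and> c0 - c0' = 0"
    by (rule generic_affine_vanishing_imp_zero[OF assms(1-4)]) (use diff_vanishes in blast)
  then show ?thesis using t t' by simp
qed

section \<open>Euclidean isometries are affine\<close>

definition dotp :: "nat \<Rightarrow> (nat \<Rightarrow> real) \<Rightarrow> (nat \<Rightarrow> real) \<Rightarrow> real" where
  "dotp k x y = (\<Sum>i<k. x i * y i)"

definition std_basis :: "nat \<Rightarrow> nat \<Rightarrow> real" where
  "std_basis j = (\<lambda>i. if i = j then 1 else 0)"

lemma dotp_commute: "dotp k x y = dotp k y x"
  by (simp add: dotp_def mult.commute)

lemma dotp_sum_right: "dotp k a (\<lambda>i. \<Sum>j<k. x j * F j i) = (\<Sum>j<k. x j * dotp k a (F j))"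
proof -
  have "dotp k a (\<lambda>i. \<Sum>j<k. x j * F j i) = (\<Sum>i<k. \<Sum>j<k. x j * (a i * F j i))"
    unfolding dotp_def by (simp add: sum_distrib_left mult.left_commute)
  also have "\<dots> = (\<Sum>j<k. \<Sum>i<k. x j * (a i * F j i))" by (rule sum.swap)
  finally show ?thesis unfolding dotp_def by (simp add: sum_distrib_left)
qed

lemma dotp_std_basis: "j < k \<Longrightarrow> dotp k x (std_basis j) = x j"
  by (simp add: dotp_def std_basis_def if_distrib cong: if_cong)

lemma std_basis_in_Rk: "j < k \<Longrightarrow> std_basis j \<in> Rk k"
  by (simp add: std_basis_def Rk_def)

lemma sum_sq_diff_eq_dotp: "(\<Sum>i<k. (x i - y i)^2) = dotp k x x - 2 * dotp k x y + dotp k y y"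
  by (simp add: dotp_def power2_eq_square algebra_simps sum.distrib sum_subtractf sum_distrib_left)

lemma dotp_preserving_imp_linear:
  assumes dotp_eq: "\<And>x y. x \<in> Rk k \<Longrightarrow> y \<in> Rk k \<Longrightarrow> dotp k (f x) (f y) = dotp k x y"
    and x: "x \<in> Rk k" and i: "i < k"
  shows "f x i = (\<Sum>j<k. x j * f (std_basis j) i)"
proof -
  define G where "G = (\<lambda>i. \<Sum>j<k. x j * f (std_basis j) i)"
  \<comment> \<open>the squared distance of \<open>f x\<close> and \<open>G\<close> expands to \<open>|x|\<^sup>2 - 2|x|\<^sup>2 + |x|\<^sup>2\<close>\<close>
  have fx_basis: "dotp k (f x) (f (std_basis j)) = x j" if "j < k" for j
    using dotp_eq[OF x std_basis_in_Rk] dotp_std_basis that by simp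
  have basis_basis: "dotp k (f (std_basis l)) (f (std_basis j)) = (if l = j then 1 else 0)"
    if "l < k" "j < k" for l j
    using dotp_eq[OF std_basis_in_Rk std_basis_in_Rk] dotp_std_basis that
    by (simp add: std_basis_def)
  have "dotp k (f x) G = (\<Sum>j<k. x j * x j)"
    unfolding G_def dotp_sum_right by (rule sum.cong) (simp_all add: fx_basis)
  then have fx_G: "dotp k (f x) G = dotp k x x" by (simp add: dotp_def)
  have G_basis: "dotp k G (f (std_basis j)) = x j" if "j < k" for j
  proof -
    have "dotp k G (f (std_basis j)) = dotp k (f (std_basis j)) G" by (rule dotp_commute)
    also have "\<dots> = (\<Sum>l<k. x l * (if j = l then 1 else 0))"
      unfolding G_def dotp_sum_right by (rule sum.cong) (simp_all add: basis_basis that)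
    also have "\<dots> = x j" using that by (simp add: if_distrib cong: if_cong)
    finally show ?thesis .
  qed
  have "dotp k G G = (\<Sum>j<k. x j * dotp k G (f (std_basis j)))"
    by (subst (2) G_def) (rule dotp_sum_right)
  also have "\<dots> = (\<Sum>j<k. x j * x j)" by (rule sum.cong) (simp_all add: G_basis)
  finally have G_G: "dotp k G G = dotp k x x" by (simp add: dotp_def)
  have "(\<Sum>i<k. (f x i - G i)^2) = 0"
    unfolding sum_sq_diff_eq_dotp fx_G G_G dotp_eq[OF x x] by simp
  then have "(f x i - G i)^2 = 0"
    using i by (subst (asm) sum_nonneg_eq_0_iff) auto
  then show ?thesis by (simp add: G_def)
qed

lemma eucl_group_subset_affine_group: "eucl_group k \<subseteq> affine_group k"
proof
  fix g assume "g \<in> eucl_group k"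
  then have bij: "bij_betw g (Rk k) (Rk k)"
    and dist: "\<And>x y. x \<in> Rk k \<Longrightarrow> y \<in> Rk k \<Longrightarrow>
                 (\<Sum>i<k. (g x i - g y i)^2) = (\<Sum>i<k. (x i - y i)^2)"
    unfolding eucl_group_def by blast+
  define z :: "nat \<Rightarrow> real" where "z = (\<lambda>_. 0)"
  have z: "z \<in> Rk k" by (simp add: z_def Rk_def)
  define f where "f x = (\<lambda>i. g x i - g z i)" for x
  have f_dist: "(\<Sum>i<k. (f x i - f y i)^2) = (\<Sum>i<k. (x i - y i)^2)"
    if "x \<in> Rk k" "y \<in> Rk k" for x y
    using dist[OF that] by (simp add: f_def)
  have f_norm: "dotp k (f x) (f x) = dotp k x x" if "x \<in> Rk k" for x
    using f_dist[OF that z] by (simp add: f_def z_def dotp_def power2_eq_square)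
  have "dotp k (f x) (f y) = dotp k x y" if "x \<in> Rk k" "y \<in> Rk k" for x y
    using f_dist[OF that] f_norm[OF that(1)] f_norm[OF that(2)]
    unfolding sum_sq_diff_eq_dotp by simp
  then have "f x i = (\<Sum>j<k. x j * f (std_basis j) i)" if "x \<in> Rk k" "i < k" for x i
    using dotp_preserving_imp_linear that by blast
  then have "\<forall>x\<in>Rk k. \<forall>i<k. g x i = (\<Sum>j<k. f (std_basis j) i * x j) + g z i"
    unfolding f_def[of x for x] by (simp add: mult.commute diff_eq_eq)
  with bij show "g \<in> affine_group k"
    unfolding affine_group_def
    by (intro CollectI conjI exI[where x="\<lambda>i j. f (std_basis j) i"] exI[where x="\<lambda>i. g z i"])
qed

lemma affine_group_coordinate_affine_of_config:
  assumes "g \<in> affine_group d'" and "d \<le> d'" and "config V d p" and "i < d'"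
  shows "affine_of_config d p V (\<lambda>u. g (p u) i)"
proof -
  obtain A b where Ab: "\<forall>x\<in>Rk d'. \<forall>i<d'. g x i = (\<Sum>j<d'. A i j * x j) + b i"
    using assms(1) unfolding affine_group_def by blast
  have "g (p u) i = (\<Sum>j<d. A i j * p u j) + b i" if "u \<in> V" for u
  proof -
    have pu: "p u \<in> Rk d" using assms(3) that by (simp add: config_def)
    then have "p u \<in> Rk d'" using assms(2) by (auto simp: Rk_def)
    then have "g (p u) i = (\<Sum>j<d'. A i j * p u j) + b i" using Ab assms(4) by blast
    moreover have "(\<Sum>j<d'. A i j * p u j) = (\<Sum>j<d. A i j * p u j)"
      using pu assms(2) by (intro sum.mono_neutral_right) (auto simp: Rk_def)
    ultimately show ?thesis by simp
  qed
  then show ?thesis unfolding affine_of_config_def by blast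
qed

section \<open>Shears and affine rigidity\<close>

definition shear :: "nat \<Rightarrow> real \<Rightarrow> (nat \<Rightarrow> real) \<Rightarrow> real \<Rightarrow> (nat \<Rightarrow> real) \<Rightarrow> nat \<Rightarrow> real" where
  "shear d e c c0 x = (\<lambda>j. x j + (if j = 0 then e * ((\<Sum>l<d. c l * x l) + c0) else 0))"

lemma shear_in_affine_group:
  assumes d: "1 \<le> d" and nz: "1 + e * c 0 \<noteq> 0"
  shows "shear d e c c0 \<in> affine_group d"
proof -
  define R where "R x = (\<Sum>l\<in>{1..<d}. c l * x l)" for x :: "nat \<Rightarrow> real"
  have R_cong: "R x = R y" if "\<And>l. l \<noteq> 0 \<Longrightarrow> x l = y l" for x y
    unfolding R_def by (intro sum.cong) (auto simp: that)
  have split0: "{..<d} = insert 0 {1..<d}" using d by auto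
  have shear_0: "shear d e c c0 x 0 = (1 + e * c 0) * x 0 + e * (R x + c0)" for x
    unfolding shear_def R_def split0 by (simp add: algebra_simps)
  have shear_j: "shear d e c c0 x j = x j" if "j \<noteq> 0" for x j
    using that by (simp add: shear_def)
  define unshear where "unshear y = (\<lambda>j. if j = 0 then (y 0 - e * (R y + c0)) / (1 + e * c 0) else y j)" for y
  have "bij_betw (shear d e c c0) (Rk d) (Rk d)"
  proof (rule bij_betw_byWitness[where f'=unshear])
    show "\<forall>x\<in>Rk d. unshear (shear d e c c0 x) = x"
    proof
      fix x
      have R_eq: "R (shear d e c c0 x) = R x" by (rule R_cong) (simp add: shear_j)
      show "unshear (shear d e c c0 x) = x"
      proof
        fix j
        show "unshear (shear d e c c0 x) j = x j"
          using nz R_eq by (simp add: unshear_def shear_0 shear_j field_simps)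
      qed
    qed
    show "\<forall>y\<in>Rk d. shear d e c c0 (unshear y) = y"
    proof
      fix y
      have "R (unshear y) = R y" by (rule R_cong) (simp add: unshear_def)
      then have "shear d e c c0 (unshear y) 0 = y 0" using nz by (simp add: shear_0 unshear_def)
      then show "shear d e c c0 (unshear y) = y"
        by (intro ext) (metis shear_j unshear_def)
    qed
    show "shear d e c c0 ` Rk d \<subseteq> Rk d" using d by (auto simp: Rk_def shear_def)
    show "unshear ` Rk d \<subseteq> Rk d" using d by (auto simp: Rk_def unshear_def)
  qed
  moreover
  define A where "A j l = (if j = l then 1 else 0) + (if j = 0 then e * c l else 0)" for j l :: nat
  define b where "b j = (if j = 0 then e * c0 else 0)" for j :: nat
  have "shear d e c c0 x j = (\<Sum>l<d. A j l * x l) + b j" if "j < d" for x j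
  proof -
    have "(\<Sum>l<d. A j l * x l)
        = (\<Sum>l<d. if j = l then x l else 0) + (\<Sum>l<d. if j = 0 then e * (c l * x l) else 0)"
      unfolding sum.distrib[symmetric] by (rule sum.cong) (auto simp: A_def algebra_simps)
    also have "\<dots> = x j + (if j = 0 then e * (\<Sum>l<d. c l * x l) else 0)"
      using that by (simp add: sum_distrib_left)
    finally show ?thesis by (simp add: shear_def b_def algebra_simps)
  qed
  ultimately show ?thesis unfolding affine_group_def by blast
qed

text \<open>Affine rigidity lets one glue functions that are affine in the configuration on each
  hyperedge: adding a small multiple of such a function to the first coordinate gives a
  framework that is affinely equivalent, via shears, to the original one, hence affinely
  congruent to it.\<close>

lemma affinely_rigid_affine_of_config:
  assumes hg: "hypergraph V H" and d: "1 \<le> d" and p: "config V d p"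
    and rigid: "affinely_rigid V H d p"
    and local: "\<forall>h\<in>H. affine_of_config d p h t"
  shows "affine_of_config d p V t"
proof -
  obtain c c0 where c: "\<forall>h\<in>H. \<forall>u\<in>h. t u = (\<Sum>l<d. c h l * p u l) + c0 h"
    using local unfolding affine_of_config_def by metis
  have "finite H" using hg unfolding hypergraph_def by (meson Pow_iff finite_Pow_iff finite_subset subsetI)
  define K where "K = (\<Sum>h\<in>H. \<bar>c h 0\<bar>)"
  define \<delta> where "\<delta> = 1 / (1 + K)"
  have "K \<ge> 0" unfolding K_def by (simp add: sum_nonneg)
  then have "\<delta> > 0" by (simp add: \<delta>_def)
  have shear_affine: "shear d \<delta> (c h) (c0 h) \<in> affine_group d" if "h \<in> H" for h
  proof (rule shear_in_affine_group[OF d])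
    have "\<bar>c h 0\<bar> \<le> K" unfolding K_def using that \<open>finite H\<close> by (intro member_le_sum) auto
    then have "\<bar>\<delta> * c h 0\<bar> < 1" using \<open>K \<ge> 0\<close> by (simp add: \<delta>_def abs_mult field_simps)
    then show "1 + \<delta> * c h 0 \<noteq> 0" by linarith
  qed
  define q where "q u = (\<lambda>j. p u j + (if j = 0 then \<delta> * t u else 0))" for u
  have "config V d q" using p d by (auto simp: config_def Rk_def q_def)
  moreover have "G_equivalent (affine_group d) H p q"
    unfolding G_equivalent_def
  proof
    fix h assume "h \<in> H"
    have "\<forall>u\<in>h. shear d \<delta> (c h) (c0 h) (p u) = q u"
      using c \<open>h \<in> H\<close> by (auto simp: shear_def q_def)
    then show "\<exists>g\<in>affine_group d. \<forall>u\<in>h. g (p u) = q u" using shear_affine \<open>h \<in> H\<close> by blast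
  qed
  ultimately obtain a where a: "a \<in> affine_group d" "\<forall>u\<in>V. a (p u) = q u"
    using rigid unfolding affinely_rigid_def G_congruent_def by blast
  have "affine_of_config d p V (\<lambda>u. (1 / \<delta>) * a (p u) 0 + (- 1 / \<delta>) * p u 0)"
    using affine_group_coordinate_affine_of_config[OF a(1) order_refl p]
      affine_of_config_coordinate[of 0 d p V] d
    by (intro affine_of_config_lincomb) auto
  then show ?thesis
    by (rule affine_of_config_cong) (use a(2) \<open>\<delta> > 0\<close> in \<open>auto simp: q_def field_simps\<close>)
qed

lemma affinely_rigid_generic_large_hyperedge:
  assumes hg: "hypergraph V H" and d: "1 \<le> d" and card: "d + 2 \<le> card V"
    and p: "config V d p" and gen: "generic_config V d p" and rigid: "affinely_rigid V H d p"
  shows "\<exists>h\<in>H. Suc d \<le> card h"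
proof (rule ccontr)
  assume "\<not> ?thesis"
  then have small: "card h \<le> d" if "h \<in> H" for h using that by (simp add: not_less_eq_eq)
  have "finite V" and edges: "\<And>h. h \<in> H \<Longrightarrow> h \<subseteq> V" using hg by (auto simp: hypergraph_def)
  obtain w where "w \<in> V" using card by fastforce
  define t :: "'a \<Rightarrow> real" where "t u = (if u = w then 1 else 0)" for u
  have "affine_of_config d p h t" if "h \<in> H" for h
  proof -
    have "insert w h \<subseteq> V" using edges[OF that] \<open>w \<in> V\<close> by blast
    then have "finite (insert w h)" using \<open>finite V\<close> by (rule finite_subset)
    then have "card (insert w h) \<le> Suc d" using small[OF that] by (simp add: card_insert_if)
    then obtain S where "insert w h \<subseteq> S" "S \<subseteq> V" "card S = Suc d"
      using exists_subset_between[of "insert w h" "Suc d" V] \<open>insert w h \<subseteq> V\<close> card \<open>finite V\<close>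
      by auto
    then show ?thesis
      using affine_of_config_subset[OF generic_affine_interpolation[OF gen \<open>finite V\<close>]] by blast
  qed
  then have "affine_of_config d p V t"
    using affinely_rigid_affine_of_config[OF hg d p rigid] by blast
  have "Suc d \<le> card (V - {w})" using card \<open>finite V\<close> \<open>w \<in> V\<close> by simp
  then obtain S where S: "S \<subseteq> V - {w}" "card S = Suc d" by (meson obtain_subset_with_card_n)
  then have "\<forall>u\<in>S. t u = 0" by (auto simp: t_def)
  then have "\<forall>u\<in>V. t u = 0"
    using generic_affine_agree[OF gen \<open>finite V\<close> _ \<open>card S = Suc d\<close>] S(1)
      \<open>affine_of_config d p V t\<close> affine_of_config_const by blast
  then have "t w = 0" using \<open>w \<in> V\<close> by blast
  then show False by (simp add: t_def)
qed

lemma Rk_mono: "d \<le> d' \<Longrightarrow> Rk d \<subseteq> Rk d'"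
  by (auto simp: Rk_def)

lemma Rk_eqI:
  assumes "x \<in> Rk k" and "y \<in> Rk k" and "\<And>i. i < k \<Longrightarrow> x i = y i"
  shows "x = y"
proof
  fix i show "x i = y i" using assms by (cases "i < k") (auto simp: Rk_def)
qed

lemma G_equivalent_mono: "G_equivalent G H p q \<Longrightarrow> G \<subseteq> G' \<Longrightarrow> G_equivalent G' H p q"
  unfolding G_equivalent_def by blast

lemma affinely_rigid_equivalent_affine_of_config:
  assumes hg: "hypergraph V H" and d: "1 \<le> d" "d \<le> d'" and p: "config V d p"
    and rigid: "affinely_rigid V H d p"
    and equiv: "G_equivalent (affine_group d') H p q" and i: "i < d'"
  shows "affine_of_config d p V (\<lambda>u. q u i)"
proof (rule affinely_rigid_affine_of_config[OF hg d(1) p rigid], intro ballI)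
  fix h assume "h \<in> H"
  then obtain g where g: "g \<in> affine_group d'" "\<forall>u\<in>h. g (p u) = q u"
    using equiv unfolding G_equivalent_def by blast
  have "h \<subseteq> V" using hg \<open>h \<in> H\<close> by (simp add: hypergraph_def)
  with affine_group_coordinate_affine_of_config[OF g(1) d(2) p i]
  have "affine_of_config d p h (\<lambda>u. g (p u) i)" by (rule affine_of_config_subset)
  then show "affine_of_config d p h (\<lambda>u. q u i)"
    by (rule affine_of_config_cong) (simp add: g(2))
qed

lemma generic_affine_map_agree:
  assumes gen: "generic_config V d p" and "finite V" and "d \<le> d'"
    and p: "config V d p" and q: "config V d' q"
    and q_affine: "\<And>i. i < d' \<Longrightarrow> affine_of_config d p V (\<lambda>u. q u i)"
    and g: "g \<in> affine_group d'"
    and S: "S \<subseteq> V" "card S = Suc d" and agree: "\<forall>u\<in>S. g (p u) = q u"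
    and "u \<in> V"
  shows "g (p u) = q u"
proof (rule Rk_eqI)
  have "p u \<in> Rk d'" using p \<open>u \<in> V\<close> Rk_mono[OF \<open>d \<le> d'\<close>] by (auto simp: config_def)
  then show "g (p u) \<in> Rk d'" using g by (auto simp: affine_group_def bij_betw_def)
  show "q u \<in> Rk d'" using q \<open>u \<in> V\<close> by (simp add: config_def)
  fix i assume "i < d'"
  have "\<forall>v\<in>V. g (p v) i = q v i"
    using generic_affine_agree[OF gen \<open>finite V\<close> S
        affine_group_coordinate_affine_of_config[OF g \<open>d \<le> d'\<close> p \<open>i < d'\<close>] q_affine[OF \<open>i < d'\<close>]]
      agree by simp
  then show "g (p u) i = q u i" using \<open>u \<in> V\<close> by blast
qed

theorem corollary4p3:
  fixes V :: "'v set" and H :: "'v set set" and d :: nat and p :: "'v \<Rightarrow> nat \<Rightarrow> real"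
  assumes "hypergraph V H"
    and "d \<ge> 1"
    and "card V \<ge> d + 2"
    and "config V d p"
    and "generic_config V d p"
    and "affinely_rigid V H d p"
  shows "universally_eucl_rigid V H d p"
  unfolding universally_eucl_rigid_def
proof (intro allI impI)
  fix d' q
  assume "d \<le> d'" and q: "config V d' q" and equiv: "G_equivalent (eucl_group d') H p q"
  have "finite V" and edges: "\<And>h. h \<in> H \<Longrightarrow> h \<subseteq> V"
    using assms(1) by (auto simp: hypergraph_def)
  have q_affine: "affine_of_config d p V (\<lambda>u. q u i)" if "i < d'" for i
    using affinely_rigid_equivalent_affine_of_config[OF assms(1,2) \<open>d \<le> d'\<close> assms(4,6)
        G_equivalent_mono[OF equiv eucl_group_subset_affine_group] that] .
  obtain h0 where "h0 \<in> H" and "Suc d \<le> card h0"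
    using affinely_rigid_generic_large_hyperedge[OF assms(1-6)] by blast
  then obtain S where S: "S \<subseteq> h0" "card S = Suc d" by (meson obtain_subset_with_card_n)
  obtain g where g: "g \<in> eucl_group d'" "\<forall>u\<in>h0. g (p u) = q u"
    using equiv \<open>h0 \<in> H\<close> unfolding G_equivalent_def by blast
  have "g (p u) = q u" if "u \<in> V" for u
  proof (rule generic_affine_map_agree[OF assms(5) \<open>finite V\<close> \<open>d \<le> d'\<close> assms(4) q q_affine
        _ _ S(2) _ that])
    show "g \<in> affine_group d'" using g(1) eucl_group_subset_affine_group by blast
    show "S \<subseteq> V" using S(1) edges[OF \<open>h0 \<in> H\<close>] by blast
    show "\<forall>u\<in>S. g (p u) = q u" using S(1) g(2) by blast
  qed
  then show "G_congruent (eucl_group d') V p q" unfolding G_congruent_def using g(1) by blast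
qed

end
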